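(* Let $\mathcal L=(\Sigma,X)$ be a language, $\Lambda$ a fuzzy theory in $\mathcal L$ and $\phi$ a formula of $\mathcal L$. Then $\mathcal A\vDash\phi$ for every $\Sigma$-algebra $\mathcal A$ that is a model of $\Lambda$ if and only if $\vdash_\Lambda\phi$.
   Context: $H$ is a frame with bottom $\bot$. An $H$-fuzzy set is a pair $(A,\mu_A)$ of a set $A$ and a function $\mu_A:A\to H$; an arrow $f:(A,\mu_A)\to(B,\mu_B)$ is a function with $\mu_A(x)\le\mu_B(f(x))$; they form $\mathbf{Fuz}_H$. For $n\ge1$, $(A,\mu_A)^n=(A^n,\mu)$ with $\mu(a_1,\dots,a_n)=\bigwedge_i\mu_A(a_i)$. A signature $\Sigma=(O,\mathrm{ar},C)$ consists of a set $O$ of operation symbols with arity $\mathrm{ar}:O\to\{1,2,3,\dots\}$ and a set $C$ of constant symbols. A language is a pair $\mathcal L=(\Sigma,X)$ with $X$ a set of variables. $\mathrm{Terms}(\mathcal L)$ is the smallest set containing $X\sqcup C$ and containing $f(t_1,\dots,t_{\mathrm{ar}(f)})$ whenever $f\in O$ and all $t_i\in\mathrm{Terms}(\mathcal L)$. A formula is either an equation $s\equiv t$ ($s,t$ terms) or a membership proposition $\mathsf E_l(t)$ with $l\in H$ and $t$ a term. A sequent $\Gamma\vdash\psi$ is a pair of a (possibly infinite) set $\Gamma$ of formulas and a formula $\psi$; $\vdash\psi$ means $\emptyset\vdash\psi$. A fuzzy theory in $\mathcal L$ is a set of sequents. For $\sigma:X\to\mathrm{Terms}(\mathcal L)$, $t[\sigma]$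 is simultaneous substitution, extended to formulas by $(s\equiv t)[\sigma]=(s[\sigma]\equiv t[\sigma])$, $\mathsf E_l(t)[\sigma]=\mathsf E_l(t[\sigma])$, and to sets of formulas elementwise. The rules of the fuzzy sequent calculus are (for all sets of formulas $\Gamma,\Delta,\Phi$, formulas $\phi,\psi$, terms, $l,l'\in H$): (A) $\Gamma\vdash\phi$ if $\phi\in\Gamma$; (Weak) from $\Gamma\vdash\phi$ infer $\Gamma\cup\Delta\vdash\phi$; (Cut) from $\Gamma\vdash\phi$ for all $\phi\in\Phi$ and $\Phi\vdash\psi$ infer $\Gamma\vdash\psi$; (Refl) $\Gamma\vdash s\equiv s$; (Sym) from $\Gamma\vdash s\equiv t$ infer $\Gamma\vdash t\equiv s$; (Trans) from $\Gamma\vdash s\equiv t$ and $\Gamma\vdash t\equiv u$ infer $\Gamma\vdash s\equiv u$; (Sub) from $\Gamma\vdash\psi$ infer $\Gamma[\sigma]\vdash\psi[\sigma]$ for any $\sigma:X\to\mathrm{Terms}(\mathcal L)$; (Cong) for $f\in O$ with $n=\mathrm{ar}(f)$, from $\Gamma\vdash t_i\equiv s_i$ ($i=1,\dots,n$) infer $\Gamma\vdash f(t_1,\dots,t_n)\equiv f(s_1,\dots,s_n)$; (Inf) $\Gamma\vdash\mathsf E_\bot(t)$; (Mon) from $\Gamma\vdash\mathsf E_l(t)$ infer $\Gamma\vdash\mathsf E_{l\wedge l'}(t)$; (Exp) for $f\in O$ with $n=\mathrm{ar}(f)$, from $\Gamma\vdash\mathsf E_{l_i}(t_i)$ ($i=1,\dots,n$)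 infer $\Gamma\vdash\mathsf E_{l_1\wedge\dots\wedge l_n}(f(t_1,\dots,t_n))$; (Sup) for $S\subseteq H$, from $\Gamma\vdash\mathsf E_l(t)$ for all $l\in S$ infer $\Gamma\vdash\mathsf E_{\sup S}(t)$; (Fun) from $\Gamma\vdash t\equiv s$ and $\Gamma\vdash\mathsf E_l(t)$ infer $\Gamma\vdash\mathsf E_l(s)$. The deductive closure $\Lambda^{\vdash}$ of a theory $\Lambda$ is the smallest set of sequents containing $\Lambda$ and closed under all these rules; $\vdash_\Lambda\phi$ means $(\emptyset\vdash\phi)\in\Lambda^{\vdash}$. A $\Sigma$-algebra $\mathcal A=((A,\mu_A),\Sigma^{\mathcal A})$ is an $H$-fuzzy set $(A,\mu_A)$ together with, for each $f\in O$, an arrow $f^{\mathcal A}:(A,\mu_A)^{\mathrm{ar}(f)}\to(A,\mu_A)$ of $\mathbf{Fuz}_H$ and, for each $c\in C$, an element $c^{\mathcal A}\in A$. An assignment is a function $\iota:X\to A$; evaluation: $x^{\mathcal A,\iota}=\iota(x)$, $c^{\mathcal A,\iota}=c^{\mathcal A}$, $f(t_1,\dots,t_n)^{\mathcal A,\iota}=f^{\mathcal A}(t_1^{\mathcal A,\iota},\dots,t_n^{\mathcal A,\iota})$. $\mathcal A\vDash_\iota s\equiv t$ iff $s^{\mathcal A,\iota}=t^{\mathcal A,\iota}$; $\mathcal A\vDash_\iota\mathsf E_l(t)$ iff $l\le\mu_A(t^{\mathcal A,\iota})$; $\mathcal A\vDash\phi$ iff $\mathcal A\vDash_\iota\phi$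 for all assignments $\iota$. $\mathcal A$ satisfies $\Gamma\vdash\psi$ if for every assignment $\iota$ with $\mathcal A\vDash_\iota\phi$ for all $\phi\in\Gamma$ one has $\mathcal A\vDash_\iota\psi$. $\mathcal A$ is a model of a theory $\Lambda$ if it satisfies every sequent of $\Lambda$. *)

theory Defs
  imports Main
begin

definition is_frame :: "'h::complete_lattice itself \<Rightarrow> bool" where
  "is_frame _ \<longleftrightarrow> (\<forall>(a::'h) S. inf a (Sup S) = Sup (inf a ` S))"

datatype ('f,'c,'v) trm = Var 'v | Cst 'c | App 'f "('f,'c,'v) trm list"

datatype ('h,'f,'c,'v) fml = Eqn "('f,'c,'v) trm" "('f,'c,'v) trm"
                           | Mem 'h "('f,'c,'v) trm"

text \<open>A language: operation symbols Ops with arity ar, constants C, variables X.\<close>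

inductive_set Terms :: "'f set \<Rightarrow> ('f \<Rightarrow> nat) \<Rightarrow> 'c set \<Rightarrow> 'v set \<Rightarrow> ('f,'c,'v) trm set"
  for Ops ar C X where
  TVar: "x \<in> X \<Longrightarrow> Var x \<in> Terms Ops ar C X"
| TCst: "c \<in> C \<Longrightarrow> Cst c \<in> Terms Ops ar C X"
| TApp: "f \<in> Ops \<Longrightarrow> length ts = ar f \<Longrightarrow> (\<forall>t\<in>set ts. t \<in> Terms Ops ar C X)
          \<Longrightarrow> App f ts \<in> Terms Ops ar C X"

definition Fmls :: "'f set \<Rightarrow> ('f \<Rightarrow> nat) \<Rightarrow> 'c set \<Rightarrow> 'v set \<Rightarrow> ('h,'f,'c,'v) fml set" where
  "Fmls Ops ar C X = {Eqn s t | s t. s \<in> Terms Ops ar C X \<and> t \<in> Terms Ops ar C X}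
                 \<union> {Mem l t | l t. t \<in> Terms Ops ar C X}"

definition fuzzy_theory ::
  "'f set \<Rightarrow> ('f \<Rightarrow> nat) \<Rightarrow> 'c set \<Rightarrow> 'v set \<Rightarrow> (('h,'f,'c,'v) fml set \<times> ('h,'f,'c,'v) fml) set \<Rightarrow> bool" where
  "fuzzy_theory Ops ar C X \<Lambda> \<longleftrightarrow>
     (\<forall>(\<Gamma>,\<psi>)\<in>\<Lambda>. \<Gamma> \<subseteq> Fmls Ops ar C X \<and> \<psi> \<in> Fmls Ops ar C X)"

primrec tsubst :: "('v \<Rightarrow> ('f,'c,'v) trm) \<Rightarrow> ('f,'c,'v) trm \<Rightarrow> ('f,'c,'v) trm" where
  "tsubst \<sigma> (Var x) = \<sigma> x"
| "tsubst \<sigma> (Cst c) = Cst c"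
| "tsubst \<sigma> (App f ts) = App f (map (tsubst \<sigma>) ts)"

fun fsubst :: "('v \<Rightarrow> ('f,'c,'v) trm) \<Rightarrow> ('h,'f,'c,'v) fml \<Rightarrow> ('h,'f,'c,'v) fml" where
  "fsubst \<sigma> (Eqn s t) = Eqn (tsubst \<sigma> s) (tsubst \<sigma> t)"
| "fsubst \<sigma> (Mem l t) = Mem l (tsubst \<sigma> t)"

inductive_set deriv ::
  "'f set \<Rightarrow> ('f \<Rightarrow> nat) \<Rightarrow> 'c set \<Rightarrow> 'v set \<Rightarrow> (('h::complete_lattice,'f,'c,'v) fml set \<times> ('h,'f,'c,'v) fml) set
   \<Rightarrow> (('h,'f,'c,'v) fml set \<times> ('h,'f,'c,'v) fml) set"
  for Ops ar C X \<Lambda> where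
  Ax: "s \<in> \<Lambda> \<Longrightarrow> s \<in> deriv Ops ar C X \<Lambda>"
| A: "\<Gamma> \<subseteq> Fmls Ops ar C X \<Longrightarrow> \<phi> \<in> \<Gamma> \<Longrightarrow> (\<Gamma>, \<phi>) \<in> deriv Ops ar C X \<Lambda>"
| Weak: "(\<Gamma>, \<phi>) \<in> deriv Ops ar C X \<Lambda> \<Longrightarrow> \<Delta> \<subseteq> Fmls Ops ar C X \<Longrightarrow> (\<Gamma> \<union> \<Delta>, \<phi>) \<in> deriv Ops ar C X \<Lambda>"
| Cut: "\<Gamma> \<subseteq> Fmls Ops ar C X \<Longrightarrow> (\<forall>\<phi>\<in>\<Phi>. (\<Gamma>, \<phi>) \<in> deriv Ops ar C X \<Lambda>) \<Longrightarrow> (\<Phi>, \<psi>) \<in> deriv Ops ar C X \<Lambda>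
        \<Longrightarrow> (\<Gamma>, \<psi>) \<in> deriv Ops ar C X \<Lambda>"
| Refl: "\<Gamma> \<subseteq> Fmls Ops ar C X \<Longrightarrow> s \<in> Terms Ops ar C X \<Longrightarrow> (\<Gamma>, Eqn s s) \<in> deriv Ops ar C X \<Lambda>"
| Sym: "(\<Gamma>, Eqn s t) \<in> deriv Ops ar C X \<Lambda> \<Longrightarrow> (\<Gamma>, Eqn t s) \<in> deriv Ops ar C X \<Lambda>"
| Trans: "(\<Gamma>, Eqn s t) \<in> deriv Ops ar C X \<Lambda> \<Longrightarrow> (\<Gamma>, Eqn t u) \<in> deriv Ops ar C X \<Lambda>
          \<Longrightarrow> (\<Gamma>, Eqn s u) \<in> deriv Ops ar C X \<Lambda>"
| Sub: "(\<Gamma>, \<psi>) \<in> deriv Ops ar C X \<Lambda> \<Longrightarrow> (\<forall>x\<in>X. \<sigma> x \<in> Terms Ops ar C X)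
        \<Longrightarrow> (fsubst \<sigma> ` \<Gamma>, fsubst \<sigma> \<psi>) \<in> deriv Ops ar C X \<Lambda>"
| Cong: "f \<in> Ops \<Longrightarrow> length ts = ar f \<Longrightarrow> length ss = ar f
         \<Longrightarrow> (\<forall>i<ar f. (\<Gamma>, Eqn (ts ! i) (ss ! i)) \<in> deriv Ops ar C X \<Lambda>)
         \<Longrightarrow> (\<Gamma>, Eqn (App f ts) (App f ss)) \<in> deriv Ops ar C X \<Lambda>"
| Inf: "\<Gamma> \<subseteq> Fmls Ops ar C X \<Longrightarrow> t \<in> Terms Ops ar C X \<Longrightarrow> (\<Gamma>, Mem bot t) \<in> deriv Ops ar C X \<Lambda>"
| Mon: "(\<Gamma>, Mem l t) \<in> deriv Ops ar C X \<Lambda> \<Longrightarrow> (\<Gamma>, Mem (inf l l') t) \<in> deriv Ops ar C X \<Lambda>"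
| Exp: "f \<in> Ops \<Longrightarrow> length ts = ar f \<Longrightarrow> length ls = ar f
        \<Longrightarrow> (\<forall>i<ar f. (\<Gamma>, Mem (ls ! i) (ts ! i)) \<in> deriv Ops ar C X \<Lambda>)
        \<Longrightarrow> (\<Gamma>, Mem (Inf (set ls)) (App f ts)) \<in> deriv Ops ar C X \<Lambda>"
| Sup: "\<Gamma> \<subseteq> Fmls Ops ar C X \<Longrightarrow> t \<in> Terms Ops ar C X
        \<Longrightarrow> (\<forall>l\<in>S. (\<Gamma>, Mem l t) \<in> deriv Ops ar C X \<Lambda>)
        \<Longrightarrow> (\<Gamma>, Mem (Sup S) t) \<in> deriv Ops ar C X \<Lambda>"
| Fun: "(\<Gamma>, Eqn t s) \<in> deriv Ops ar C X \<Lambda> \<Longrightarrow> (\<Gamma>, Mem l t) \<in> deriv Ops ar C X \<Lambda>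
        \<Longrightarrow> (\<Gamma>, Mem l s) \<in> deriv Ops ar C X \<Lambda>"

record ('a,'h,'f,'c) alg =
  carrier :: "'a set"
  memb :: "'a \<Rightarrow> 'h"
  oper :: "'f \<Rightarrow> 'a list \<Rightarrow> 'a"
  cnst :: "'c \<Rightarrow> 'a"

text \<open>Sigma-algebra: each f is an arrow (A,mu)^ar(f) -> (A,mu) of Fuz_H
  (the membership of a tuple being the meet of the memberships; ar f >= 1),
  each constant an element of A.\<close>
definition is_algebra :: "'f set \<Rightarrow> ('f \<Rightarrow> nat) \<Rightarrow> 'c set \<Rightarrow> ('a,'h::complete_lattice,'f,'c) alg \<Rightarrow> bool" where
  "is_algebra Ops ar C \<A> \<longleftrightarrow>
     (\<forall>f\<in>Ops. \<forall>as. length as = ar f \<and> set as \<subseteq> carrier \<A> \<longrightarrow>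
          oper \<A> f as \<in> carrier \<A> \<and> Inf (memb \<A> ` set as) \<le> memb \<A> (oper \<A> f as))
   \<and> (\<forall>c\<in>C. cnst \<A> c \<in> carrier \<A>)"

primrec eval :: "('a,'h,'f,'c) alg \<Rightarrow> ('v \<Rightarrow> 'a) \<Rightarrow> ('f,'c,'v) trm \<Rightarrow> 'a" where
  "eval \<A> \<iota> (Var x) = \<iota> x"
| "eval \<A> \<iota> (Cst c) = cnst \<A> c"
| "eval \<A> \<iota> (App f ts) = oper \<A> f (map (eval \<A> \<iota>) ts)"

fun holds :: "('a,'h::complete_lattice,'f,'c) alg \<Rightarrow> ('v \<Rightarrow> 'a) \<Rightarrow> ('h,'f,'c,'v) fml \<Rightarrow> bool" where
  "holds \<A> \<iota> (Eqn s t) \<longleftrightarrow> eval \<A> \<iota> s = eval \<A> \<iota> t"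
| "holds \<A> \<iota> (Mem l t) \<longleftrightarrow> l \<le> memb \<A> (eval \<A> \<iota> t)"

text \<open>Assignments: functions X -> A (values outside X are irrelevant).\<close>
definition assignment :: "'v set \<Rightarrow> ('a,'h,'f,'c) alg \<Rightarrow> ('v \<Rightarrow> 'a) \<Rightarrow> bool" where
  "assignment X \<A> \<iota> \<longleftrightarrow> (\<forall>x\<in>X. \<iota> x \<in> carrier \<A>)"

definition valid :: "'v set \<Rightarrow> ('a,'h::complete_lattice,'f,'c) alg \<Rightarrow> ('h,'f,'c,'v) fml \<Rightarrow> bool" where
  "valid X \<A> \<phi> \<longleftrightarrow> (\<forall>\<iota>. assignment X \<A> \<iota> \<longrightarrow> holds \<A> \<iota> \<phi>)"

definition satisfies_seq :: "'v set \<Rightarrow> ('a,'h::complete_lattice,'f,'c) alg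
    \<Rightarrow> ('h,'f,'c,'v) fml set \<times> ('h,'f,'c,'v) fml \<Rightarrow> bool" where
  "satisfies_seq X \<A> sq \<longleftrightarrow>
     (\<forall>\<iota>. assignment X \<A> \<iota> \<longrightarrow> (\<forall>\<phi>\<in>fst sq. holds \<A> \<iota> \<phi>) \<longrightarrow> holds \<A> \<iota> (snd sq))"

definition is_model :: "'f set \<Rightarrow> ('f \<Rightarrow> nat) \<Rightarrow> 'c set \<Rightarrow> 'v set \<Rightarrow> ('a,'h::complete_lattice,'f,'c) alg
    \<Rightarrow> (('h,'f,'c,'v) fml set \<times> ('h,'f,'c,'v) fml) set \<Rightarrow> bool" where
  "is_model Ops ar C X \<A> \<Lambda> \<longleftrightarrow> is_algebra Ops ar C \<A> \<and> (\<forall>sq\<in>\<Lambda>. satisfies_seq X \<A> sq)"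

end

theory Submission
  imports Defs
begin

text \<open>For completeness one builds the
  term model: the carrier consists of the classes of terms modulo provable equality, an operation
  acts on representatives, and the membership degree of a class is the supremum of all degrees
  \<open>l\<close> with \<open>\<turnstile>\<^sub>\<Lambda> E\<^sub>l(t)\<close>. By (Sup) this supremum is itself provable and by (Mon) every smaller degree
  is, so the model validates exactly the provable formulas; evaluating under the assignment
  \<open>x \<mapsto> [x]\<close> then turns validity of \<open>\<phi>\<close> into provability of \<open>\<phi>\<close>.\<close>

lemma Eqn_in_Fmls_iff [simp]:
  "Eqn s t \<in> Fmls Ops ar C X \<longleftrightarrow> s \<in> Terms Ops ar C X \<and> t \<in> Terms Ops ar C X"
  by (auto simp: Fmls_def)

lemma Mem_in_Fmls_iff [simp]: "Mem l t \<in> Fmls Ops ar C X \<longleftrightarrow> t \<in> Terms Ops ar C X"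
  by (auto simp: Fmls_def)

lemma App_in_TermsI:
  "f \<in> Ops \<Longrightarrow> length ts = ar f \<Longrightarrow> (\<forall>i<ar f. ts ! i \<in> Terms Ops ar C X)
    \<Longrightarrow> App f ts \<in> Terms Ops ar C X"
  by (rule TApp) (auto simp: in_set_conv_nth)

lemma tsubst_in_Terms:
  "t \<in> Terms Ops ar C X \<Longrightarrow> \<forall>x\<in>X. \<sigma> x \<in> Terms Ops ar C X \<Longrightarrow> tsubst \<sigma> t \<in> Terms Ops ar C X"
proof (induction t rule: Terms.induct)
  case (TApp f ts)
  then show ?case by (auto intro!: Terms.TApp)
qed (auto intro: Terms.intros)

lemma fsubst_in_Fmls:
  "\<phi> \<in> Fmls Ops ar C X \<Longrightarrow> \<forall>x\<in>X. \<sigma> x \<in> Terms Ops ar C X \<Longrightarrow> fsubst \<sigma> \<phi> \<in> Fmls Ops ar C X"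
  by (cases \<phi>) (auto intro: tsubst_in_Terms)

lemma tsubst_Var [simp]: "tsubst Var t = t"
  by (induction t) (auto intro: map_idI)

lemma fsubst_Var [simp]: "fsubst Var \<phi> = \<phi>"
  by (cases \<phi>) auto

lemma deriv_conclusion_in_Fmls:
  assumes "fuzzy_theory Ops ar C X \<Lambda>" and "(\<Gamma>, \<psi>) \<in> deriv Ops ar C X \<Lambda>"
  shows "\<psi> \<in> Fmls Ops ar C X"
proof -
  have "snd sq \<in> Fmls Ops ar C X" if "sq \<in> deriv Ops ar C X \<Lambda>" for sq
    using that
  proof (induction rule: deriv.induct)
    case (Ax sq)
    then show ?case using assms(1) by (auto simp: fuzzy_theory_def)
  qed (auto simp: fsubst_in_Fmls intro!: App_in_TermsI)
  from this[OF assms(2)] show ?thesis by simp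
qed

lemma eval_in_carrier:
  assumes "is_algebra Ops ar C \<A>" and "assignment X \<A> \<iota>" and "t \<in> Terms Ops ar C X"
  shows "eval \<A> \<iota> t \<in> carrier \<A>"
  using assms(3)
proof (induction rule: Terms.induct)
  case (TApp f ts)
  then have "set (map (eval \<A> \<iota>) ts) \<subseteq> carrier \<A>" by auto
  with TApp show ?case using assms(1) by (auto simp: is_algebra_def)
qed (use assms in \<open>auto simp: assignment_def is_algebra_def\<close>)

lemma eval_tsubst: "eval \<A> \<iota> (tsubst \<sigma> t) = eval \<A> (\<lambda>x. eval \<A> \<iota> (\<sigma> x)) t"
  by (induction t) (auto cong: map_cong)

lemma holds_fsubst: "holds \<A> \<iota> (fsubst \<sigma> \<phi>) \<longleftrightarrow> holds \<A> (\<lambda>x. eval \<A> \<iota> (\<sigma> x)) \<phi>"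
  by (cases \<phi>) (auto simp: eval_tsubst)

lemma assignment_eval_subst:
  assumes "is_algebra Ops ar C \<A>" and "assignment X \<A> \<iota>" and "\<forall>x\<in>X. \<sigma> x \<in> Terms Ops ar C X"
  shows "assignment X \<A> (\<lambda>x. eval \<A> \<iota> (\<sigma> x))"
  using assms eval_in_carrier unfolding assignment_def by blast

lemma Inf_le_memb_eval_App:
  assumes "is_algebra Ops ar C \<A>" and "assignment X \<A> \<iota>"
    and "f \<in> Ops" and "length ts = ar f" and "length ls = ar f"
    and "\<forall>i<ar f. ts ! i \<in> Terms Ops ar C X \<and> ls ! i \<le> memb \<A> (eval \<A> \<iota> (ts ! i))"
  shows "Inf (set ls) \<le> memb \<A> (eval \<A> \<iota> (App f ts))"
proof -
  let ?as = "map (eval \<A> \<iota>) ts"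
  have "set ?as \<subseteq> carrier \<A>"
    using assms eval_in_carrier[OF assms(1,2)] by (auto simp: in_set_conv_nth)
  then have "Inf (memb \<A> ` set ?as) \<le> memb \<A> (oper \<A> f ?as)"
    using assms(1,3,4) unfolding is_algebra_def by (metis length_map)
  moreover have "Inf (set ls) \<le> Inf (memb \<A> ` set ?as)"
  proof (rule Inf_greatest)
    fix y assume "y \<in> memb \<A> ` set ?as"
    then obtain i where i: "i < ar f" and y: "y = memb \<A> (eval \<A> \<iota> (ts ! i))"
      using assms(4) by (auto simp: in_set_conv_nth)
    have "Inf (set ls) \<le> ls ! i" using i assms(5) by (simp add: Inf_lower)
    also have "\<dots> \<le> y" using i y assms(6) by blast
    finally show "Inf (set ls) \<le> y" .
  qed
  ultimately show ?thesis by simp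
qed

theorem deriv_sound:
  assumes "fuzzy_theory Ops ar C X \<Lambda>" and "is_model Ops ar C X \<A> \<Lambda>"
    and "sq \<in> deriv Ops ar C X \<Lambda>"
  shows "satisfies_seq X \<A> sq"
proof -
  have algebra: "is_algebra Ops ar C \<A>" using assms(2) by (simp add: is_model_def)
  show ?thesis using assms(3) unfolding satisfies_seq_def
  proof (induction rule: deriv.induct)
    case (Ax sq)
    then show ?case using assms(2) by (auto simp: is_model_def satisfies_seq_def)
  next
    case (Cut \<Gamma> \<Phi> \<psi>)
    then show ?case by fastforce
  next
    case (Sub \<Gamma> \<psi> \<sigma>)
    show ?case
    proof (intro allI impI)
      fix \<iota> assume \<iota>: "assignment X \<A> \<iota>"
        and \<Gamma>: "\<forall>\<phi>\<in>fst (fsubst \<sigma> ` \<Gamma>, fsubst \<sigma> \<psi>). holds \<A> \<iota> \<phi>"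
      have "assignment X \<A> (\<lambda>x. eval \<A> \<iota> (\<sigma> x))"
        using assignment_eval_subst[OF algebra \<iota> Sub.hyps(2)] .
      with Sub.IH \<Gamma> show "holds \<A> \<iota> (snd (fsubst \<sigma> ` \<Gamma>, fsubst \<sigma> \<psi>))"
        by (auto simp: holds_fsubst)
    qed
  next
    case (Cong f ts ss \<Gamma>)
    show ?case
    proof (intro allI impI)
      fix \<iota> assume "assignment X \<A> \<iota>"
        and "\<forall>\<phi>\<in>fst (\<Gamma>, Eqn (App f ts) (App f ss)). holds \<A> \<iota> \<phi>"
      with Cong have "map (eval \<A> \<iota>) ts = map (eval \<A> \<iota>) ss"
        by (auto intro: nth_equalityI)
      then show "holds \<A> \<iota> (snd (\<Gamma>, Eqn (App f ts) (App f ss)))" by simp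
    qed
  next
    case (Mon \<Gamma> l t l')
    then show ?case by (auto intro: le_infI1)
  next
    case (Exp f ts ls \<Gamma>)
    have terms: "\<forall>i<ar f. ts ! i \<in> Terms Ops ar C X"
      using Exp.IH deriv_conclusion_in_Fmls[OF assms(1)] by fastforce
    show ?case
    proof (intro allI impI)
      fix \<iota> assume \<iota>: "assignment X \<A> \<iota>"
        and \<Gamma>: "\<forall>\<phi>\<in>fst (\<Gamma>, Mem (Inf (set ls)) (App f ts)). holds \<A> \<iota> \<phi>"
      have "\<forall>i<ar f. ts ! i \<in> Terms Ops ar C X \<and> ls ! i \<le> memb \<A> (eval \<A> \<iota> (ts ! i))"
        using terms Exp.IH \<iota> \<Gamma> by fastforce
      then show "holds \<A> \<iota> (snd (\<Gamma>, Mem (Inf (set ls)) (App f ts)))"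
        using Inf_le_memb_eval_App[OF algebra \<iota> Exp.hyps(1-3)] by simp
    qed
  next
    case (Sup \<Gamma> t S)
    then show ?case by (auto intro: Sup_least)
  qed auto
qed

context
  fixes Ops :: "'f set" and ar :: "'f \<Rightarrow> nat" and C :: "'c set" and X :: "'v set"
    and \<Lambda> :: "(('h::complete_lattice,'f,'c,'v) fml set \<times> ('h,'f,'c,'v) fml) set"
  assumes fuzzy_theory: "fuzzy_theory Ops ar C X \<Lambda>"
begin

abbreviation provable :: "('h,'f,'c,'v) fml \<Rightarrow> bool" where
  "provable \<phi> \<equiv> ({}, \<phi>) \<in> deriv Ops ar C X \<Lambda>"

definition term_class :: "('f,'c,'v) trm \<Rightarrow> ('f,'c,'v) trm set" where
  "term_class t = {s \<in> Terms Ops ar C X. provable (Eqn s t)}"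

definition class_rep :: "('f,'c,'v) trm set \<Rightarrow> ('f,'c,'v) trm" where
  "class_rep A = (SOME s. s \<in> Terms Ops ar C X \<and> A = term_class s)"

definition provable_degree :: "('f,'c,'v) trm \<Rightarrow> 'h" where
  "provable_degree t = Sup {l. provable (Mem l t)}"

definition term_model :: "(('f,'c,'v) trm set,'h,'f,'c) alg" where
  "term_model =
    \<lparr>carrier = term_class ` Terms Ops ar C X,
     memb = (\<lambda>A. Sup {l. \<exists>t\<in>A. provable (Mem l t)}),
     oper = (\<lambda>f as. term_class (App f (map class_rep as))),
     cnst = (\<lambda>c. term_class (Cst c))\<rparr>"

lemma provable_refl: "t \<in> Terms Ops ar C X \<Longrightarrow> provable (Eqn t t)"
  by (rule Refl) auto

lemma term_class_eq_iff:
  assumes "s \<in> Terms Ops ar C X" and "t \<in> Terms Ops ar C X"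
  shows "term_class s = term_class t \<longleftrightarrow> provable (Eqn s t)"
proof
  assume "term_class s = term_class t"
  then have "s \<in> term_class t" using assms(1) provable_refl by (auto simp: term_class_def)
  then show "provable (Eqn s t)" by (simp add: term_class_def)
next
  assume "provable (Eqn s t)"
  moreover from this have "provable (Eqn t s)" by (rule Sym)
  ultimately show "term_class s = term_class t"
    unfolding term_class_def by (auto intro: Trans)
qed

lemma
  assumes "A \<in> term_class ` Terms Ops ar C X"
  shows class_rep_in_Terms: "class_rep A \<in> Terms Ops ar C X"
    and term_class_class_rep: "term_class (class_rep A) = A"
proof -
  have "\<exists>s. s \<in> Terms Ops ar C X \<and> A = term_class s" using assms by auto
  then have "class_rep A \<in> Terms Ops ar C X \<and> A = term_class (class_rep A)"
    unfolding class_rep_def by (rule someI_ex)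
  then show "class_rep A \<in> Terms Ops ar C X" and "term_class (class_rep A) = A" by simp_all
qed

lemma provable_Mem_iff_le_provable_degree:
  assumes "t \<in> Terms Ops ar C X"
  shows "provable (Mem l t) \<longleftrightarrow> l \<le> provable_degree t"
proof
  assume "l \<le> provable_degree t"
  then have "inf (provable_degree t) l = l" by (rule inf_absorb2)
  moreover have "provable (Mem (provable_degree t) t)"
    unfolding provable_degree_def by (rule deriv.Sup) (use assms in auto)
  then have "provable (Mem (inf (provable_degree t) l) t)" by (rule Mon)
  ultimately show "provable (Mem l t)" by simp
qed (auto simp: provable_degree_def intro: Sup_upper)

lemma memb_term_model_class:
  assumes "t \<in> Terms Ops ar C X"
  shows "memb term_model (term_class t) = provable_degree t"
proof -
  have "{l. \<exists>u\<in>term_class t. provable (Mem l u)} = {l. provable (Mem l t)}"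
    using assms provable_refl by (auto simp: term_class_def intro: Fun)
  then show ?thesis by (simp add: term_model_def provable_degree_def)
qed

lemma oper_term_model_classes:
  assumes "f \<in> Ops" and "length ts = ar f" and "\<forall>t\<in>set ts. t \<in> Terms Ops ar C X"
  shows "oper term_model f (map term_class ts) = term_class (App f ts)"
proof -
  let ?rs = "map (class_rep \<circ> term_class) ts"
  have reps: "class_rep (term_class t) \<in> Terms Ops ar C X"
    "provable (Eqn (class_rep (term_class t)) t)" if t: "t \<in> Terms Ops ar C X" for t
  proof -
    have A: "term_class t \<in> term_class ` Terms Ops ar C X" using t by blast
    then have r: "class_rep (term_class t) \<in> Terms Ops ar C X" by (rule class_rep_in_Terms)
    then show "class_rep (term_class t) \<in> Terms Ops ar C X"
      and "provable (Eqn (class_rep (term_class t)) t)"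
      using term_class_eq_iff[OF r t] term_class_class_rep[OF A] by simp_all
  qed
  have "provable (Eqn (App f ?rs) (App f ts))"
    by (rule Cong) (use assms reps in auto)
  moreover have "App f ?rs \<in> Terms Ops ar C X" and "App f ts \<in> Terms Ops ar C X"
    using assms reps by (auto intro!: TApp)
  ultimately show ?thesis by (simp add: term_model_def term_class_eq_iff)
qed

lemma term_model_is_algebra: "is_algebra Ops ar C term_model"
  unfolding is_algebra_def
proof (intro conjI ballI allI impI)
  fix c assume "c \<in> C"
  then show "cnst term_model c \<in> carrier term_model" by (auto simp: term_model_def intro: TCst)
next
  fix f and as assume f: "f \<in> Ops" and as: "length as = ar f \<and> set as \<subseteq> carrier term_model"
  define ts where "ts = map class_rep as"
  have "map term_class ts = as"
    unfolding ts_def map_map by (rule map_idI) (use as term_class_class_rep in \<open>auto simp: term_model_def\<close>)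
  moreover have "\<forall>t\<in>set ts. t \<in> Terms Ops ar C X"
    using as class_rep_in_Terms by (auto simp: ts_def term_model_def)
  ultimately have ts: "as = map term_class ts" "\<forall>t\<in>set ts. t \<in> Terms Ops ar C X" by simp_all
  have len: "length ts = ar f" using as ts by simp
  have app: "App f ts \<in> Terms Ops ar C X" using f len ts by (auto intro: TApp)
  then show "oper term_model f as \<in> carrier term_model"
    using oper_term_model_classes[OF f len] ts by (simp add: term_model_def)
  have "provable (Mem (Inf (set (map provable_degree ts))) (App f ts))"
    by (rule Exp) (use f len ts provable_Mem_iff_le_provable_degree in auto)
  then show "Inf (memb term_model ` set as) \<le> memb term_model (oper term_model f as)"
    using ts app oper_term_model_classes[OF f len] memb_term_model_class
      provable_Mem_iff_le_provable_degree
    by (simp add: image_image)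
qed

lemma eval_term_model:
  assumes "t \<in> Terms Ops ar C X" and "\<forall>x\<in>X. \<sigma> x \<in> Terms Ops ar C X \<and> \<iota> x = term_class (\<sigma> x)"
  shows "eval term_model \<iota> t = term_class (tsubst \<sigma> t)"
  using assms(1)
proof (induction rule: Terms.induct)
  case (TApp f ts)
  then have "eval term_model \<iota> (App f ts) = oper term_model f (map term_class (map (tsubst \<sigma>) ts))"
    by (simp cong: map_cong)
  also have "\<dots> = term_class (App f (map (tsubst \<sigma>) ts))"
    using TApp assms(2) by (intro oper_term_model_classes) (auto intro: tsubst_in_Terms)
  finally show ?case by simp
qed (use assms(2) in \<open>auto simp: term_model_def\<close>)

lemma holds_term_model_iff_provable:
  assumes "\<phi> \<in> Fmls Ops ar C X" and \<sigma>: "\<forall>x\<in>X. \<sigma> x \<in> Terms Ops ar C X \<and> \<iota> x = term_class (\<sigma> x)"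
  shows "holds term_model \<iota> \<phi> \<longleftrightarrow> provable (fsubst \<sigma> \<phi>)"
proof -
  have subst: "tsubst \<sigma> t \<in> Terms Ops ar C X" if "t \<in> Terms Ops ar C X" for t
    using that \<sigma> tsubst_in_Terms by blast
  show ?thesis
  proof (cases \<phi>)
    case (Eqn s t)
    with assms show ?thesis
      by (simp add: eval_term_model[OF _ \<sigma>] term_class_eq_iff subst)
  next
    case (Mem l t)
    with assms show ?thesis
      by (simp add: eval_term_model[OF _ \<sigma>] memb_term_model_class
          provable_Mem_iff_le_provable_degree subst)
  qed
qed

lemma term_model_satisfies_theory:
  assumes "(\<Gamma>, \<psi>) \<in> \<Lambda>"
  shows "satisfies_seq X term_model (\<Gamma>, \<psi>)"
  unfolding satisfies_seq_def fst_conv snd_conv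
proof (intro allI impI)
  fix \<iota> assume \<iota>: "assignment X term_model \<iota>" and \<Gamma>: "\<forall>\<phi>\<in>\<Gamma>. holds term_model \<iota> \<phi>"
  have \<Gamma>_\<psi>: "\<Gamma> \<subseteq> Fmls Ops ar C X" "\<psi> \<in> Fmls Ops ar C X"
    using fuzzy_theory assms by (auto simp: fuzzy_theory_def)
  define \<sigma> where "\<sigma> x = class_rep (\<iota> x)" for x
  have \<sigma>: "\<forall>x\<in>X. \<sigma> x \<in> Terms Ops ar C X \<and> \<iota> x = term_class (\<sigma> x)"
    using \<iota> class_rep_in_Terms term_class_class_rep
    by (auto simp: assignment_def term_model_def \<sigma>_def)
  then have "(fsubst \<sigma> ` \<Gamma>, fsubst \<sigma> \<psi>) \<in> deriv Ops ar C X \<Lambda>"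
    using assms by (auto intro: Sub Ax)
  moreover have "\<forall>\<phi>\<in>fsubst \<sigma> ` \<Gamma>. provable \<phi>"
    using \<Gamma> \<Gamma>_\<psi>(1) holds_term_model_iff_provable[OF _ \<sigma>] by blast
  ultimately have "provable (fsubst \<sigma> \<psi>)" by (blast intro: Cut)
  then show "holds term_model \<iota> \<psi>"
    using holds_term_model_iff_provable[OF \<Gamma>_\<psi>(2) \<sigma>] by simp
qed

lemma term_model_is_model: "is_model Ops ar C X term_model \<Lambda>"
  using term_model_is_algebra term_model_satisfies_theory by (auto simp: is_model_def)

theorem valid_term_model_imp_provable:
  assumes "\<phi> \<in> Fmls Ops ar C X" and "valid X term_model \<phi>"
  shows "provable \<phi>"
proof -
  have vars: "\<forall>x\<in>X. Var x \<in> Terms Ops ar C X \<and> term_class (Var x) = term_class (Var x)"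
    by (auto intro: TVar)
  then have "assignment X term_model (\<lambda>x. term_class (Var x))"
    by (auto simp: assignment_def term_model_def)
  with assms(2) have "holds term_model (\<lambda>x. term_class (Var x)) \<phi>"
    by (simp add: valid_def)
  then show ?thesis using holds_term_model_iff_provable[OF assms(1) vars] by simp
qed

end

theorem corollary26:
  fixes Ops :: "'f set" and ar :: "'f \<Rightarrow> nat" and C :: "'c set" and X :: "'v set"
    and \<Lambda> :: "(('h::complete_lattice,'f,'c,'v) fml set \<times> ('h,'f,'c,'v) fml) set"
    and \<phi> :: "('h,'f,'c,'v) fml"
  assumes "is_frame TYPE('h)"
    and "\<forall>f\<in>Ops. ar f \<ge> 1"
    and "fuzzy_theory Ops ar C X \<Lambda>"
    and "\<phi> \<in> Fmls Ops ar C X"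
  shows "(({}, \<phi>) \<in> deriv Ops ar C X \<Lambda> \<longrightarrow>
            (\<forall>\<A> :: ('a,'h,'f,'c) alg. is_model Ops ar C X \<A> \<Lambda> \<longrightarrow> valid X \<A> \<phi>))
       \<and> ((\<forall>\<A> :: (('f,'c,'v) trm set,'h,'f,'c) alg. is_model Ops ar C X \<A> \<Lambda> \<longrightarrow> valid X \<A> \<phi>)
            \<longrightarrow> ({}, \<phi>) \<in> deriv Ops ar C X \<Lambda>)"
proof (intro conjI impI allI)
  fix \<A> :: "('a,'h,'f,'c) alg"
  assume "({}, \<phi>) \<in> deriv Ops ar C X \<Lambda>" and "is_model Ops ar C X \<A> \<Lambda>"
  then have "satisfies_seq X \<A> ({}, \<phi>)" using deriv_sound[OF assms(3)] by blast
  then show "valid X \<A> \<phi>" by (simp add: valid_def satisfies_seq_def)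
next
  assume "\<forall>\<A> :: (('f,'c,'v) trm set,'h,'f,'c) alg. is_model Ops ar C X \<A> \<Lambda> \<longrightarrow> valid X \<A> \<phi>"
  then have "valid X (term_model Ops ar C X \<Lambda>) \<phi>"
    using term_model_is_model[OF assms(3)] by blast
  then show "({}, \<phi>) \<in> deriv Ops ar C X \<Lambda>"
    using valid_term_model_imp_provable[OF assms(3,4)] by blast
qed

end
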